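(* Let $p_*$ be a probability density on $\mathbb{R}^d$, let $L>0$, and set $S=\frac12\log\frac{2L+1}{2L}$. Let $K\in\mathbb{N}_+$, let $\eta>0$ be such that $R=S/\eta$ is a positive integer, and consider the Ornstein–Uhlenbeck process $\mathrm{d}\mathbf{x}_t=-\mathbf{x}_t\,\mathrm{d}t+\sqrt{2}\,\mathrm{d}B_t$, $\mathbf{x}_0\sim p_*$, with $p_{k,t}$ the density of $\mathbf{x}_{kS+t}$. Assume that for every $k\in\{0,\dots,K-1\}$ and $t\in[0,S]$, $\nabla\log p_{k,t}$ is $L$-Lipschitz. For $k\in\{0,\dots,K-1\}$, $r\in\{0,\dots,R-1\}$ and $\mathbf{x}\in\mathbb{R}^d$ define the density $$q_{k,S-r\eta}(\mathbf{x}'|\mathbf{x})\propto\exp\Big(\log p_{k,0}(\mathbf{x}')-\frac{\|\mathbf{x}-e^{-(S-r\eta)}\mathbf{x}'\|^2}{2(1-e^{-2(S-r\eta)})}\Big),$$ and set $\mu_r=\frac12\cdot\frac{e^{-2(S-r\eta)}}{1-e^{-2(S-r\eta)}}$, $L_r=\frac32\cdot\frac{e^{-2(S-r\eta)}}{1-e^{-2(S-r\eta)}}$. Then $\mu_r I\preceq-\nabla^2_{\mathbf{x}'}\log q_{k,S-r\eta}(\mathbf{x}'|\mathbf{x})\preceq L_r I$. *)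

theory Defs
  imports "HOL-Analysis.Analysis"
begin

definition gauss_kernel :: "real \<Rightarrow> 'a::euclidean_space \<Rightarrow> real" where
  "gauss_kernel s z = (2 * pi * s) powr (- (real DIM('a)) / 2) * exp (- ((norm z)^2) / (2 * s))"

definition prob_density :: "('a::euclidean_space \<Rightarrow> real) \<Rightarrow> bool" where
  "prob_density p \<longleftrightarrow> p \<in> borel_measurable lborel \<and> (\<forall>x. 0 \<le> p x)
     \<and> integrable lborel p \<and> integral\<^sup>L lborel p = 1"

text \<open>Density at time t of the OU process dx = -x dt + sqrt 2 dB with x_0 having density p0:
  x_t = e^(-t) x_0 + sqrt(1 - e^(-2t)) Z, hence the density is a Gaussian convolution.\<close>
definition OU_density :: "('a::euclidean_space \<Rightarrow> real) \<Rightarrow> real \<Rightarrow> 'a \<Rightarrow> real" where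
  "OU_density p0 t x = (if t = 0 then p0 x
     else \<integral>y. p0 y * gauss_kernel (1 - exp (-2 * t)) (x - exp (- t) *\<^sub>R y) \<partial>lborel)"

definition grad_log_lipschitz :: "real \<Rightarrow> ('a::euclidean_space \<Rightarrow> real) \<Rightarrow> bool" where
  "grad_log_lipschitz L p \<longleftrightarrow> (\<forall>x. 0 < p x) \<and>
     (\<exists>G. (\<forall>x. ((\<lambda>y. ln (p y)) has_derivative (\<lambda>h. G x \<bullet> h)) (at x))
        \<and> (\<forall>x y. norm (G x - G y) \<le> L * norm (x - y)))"

definition hessian_at :: "('a::euclidean_space \<Rightarrow> real) \<Rightarrow> 'a \<Rightarrow> ('a \<Rightarrow> 'a) \<Rightarrow> bool" where
  "hessian_at g x H \<longleftrightarrow> (\<exists>G. (\<forall>\<^sub>F y in nhds x. (g has_derivative (\<lambda>h. G y \<bullet> h)) (at y))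
     \<and> (G has_derivative H) (at x))"

definition q_cond :: "('a::euclidean_space \<Rightarrow> real) \<Rightarrow> real \<Rightarrow> 'a \<Rightarrow> 'a \<Rightarrow> real" where
  "q_cond p \<tau> x x' =
     (let f = (\<lambda>z. exp (ln (p z) - (norm (x - exp (- \<tau>) *\<^sub>R z))^2 / (2 * (1 - exp (-2 * \<tau>)))))
      in f x' / (\<integral>z. f z \<partial>lborel))"

end

(*
  Up to the additive constant log of the normaliser, -log q(x'|x) is the quadratic
  |x - e^(-tau) x'|^2 / (2 (1 - e^(-2 tau))), whose Hessian is c I with
  c = e^(-2 tau) / (1 - e^(-2 tau)), minus log p, whose Hessian has operator norm at most L
  because the gradient of log p is L-Lipschitz. Hence the Hessian lies between (c - L) I and
  (c + L) I. The choice of S makes c >= 2 L for 0 < tau <= S, which turns these bounds into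
  c/2 and 3c/2. The normaliser is finite and positive because, by the descent lemma,
  log p grows at most like L/2 |x'|^2 while the quadratic grows like c/2 |x'|^2 with c > L.
*)

theory Submission
  imports Defs "HOL-Probability.Probability"
begin

lemma integrable_exp_neg_sq_real:
  assumes "\<beta> > 0"
  shows "integrable lborel (\<lambda>t::real. exp (- \<beta> * t\<^sup>2))"
proof -
  define \<sigma> where "\<sigma> = sqrt (1 / (2 * \<beta>))"
  have \<sigma>: "\<sigma> > 0" "\<sigma>\<^sup>2 = 1 / (2 * \<beta>)"
    using assms by (simp_all add: \<sigma>_def)
  then have "(\<lambda>t. exp (- \<beta> * t\<^sup>2)) = (\<lambda>t. sqrt (2 * pi * \<sigma>\<^sup>2) * normal_density 0 \<sigma> t)"
    by (auto simp: normal_density_def fun_eq_iff)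
  then show ?thesis
    using \<sigma> by simp
qed

lemma integrable_exp_neg_norm_sq:
  assumes "\<beta> > 0"
  shows "integrable lborel (\<lambda>z::'a::euclidean_space. exp (- \<beta> * (norm z)\<^sup>2))"
proof (subst integrable_iff_bounded, intro conjI)
  show "(\<lambda>z::'a. exp (- \<beta> * (norm z)\<^sup>2)) \<in> borel_measurable lborel"
    by measurable
  have product: "ennreal (norm (exp (- \<beta> * (norm z)\<^sup>2))) = (\<Prod>b\<in>Basis. ennreal (exp (- \<beta> * (z \<bullet> b)\<^sup>2)))"
    for z :: 'a
  proof -
    have "(norm z)\<^sup>2 = (\<Sum>b\<in>Basis. (z \<bullet> b)\<^sup>2)"
      unfolding power2_norm_eq_inner by (subst euclidean_inner) (simp add: power2_eq_square)
    then have "exp (- \<beta> * (norm z)\<^sup>2) = (\<Prod>b\<in>Basis. exp (- \<beta> * (z \<bullet> b)\<^sup>2))"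
      by (simp add: sum_distrib_left exp_sum[symmetric] sum_negf)
    then show ?thesis
      by (simp add: prod_ennreal prod_nonneg)
  qed
  have "(\<integral>\<^sup>+t. ennreal (exp (- \<beta> * t\<^sup>2)) \<partial>lborel) < \<infinity>"
    using integrable_exp_neg_sq_real[OF assms] by (simp add: integrable_iff_bounded)
  then show "(\<integral>\<^sup>+z. ennreal (norm (exp (- \<beta> * (norm (z::'a))\<^sup>2))) \<partial>lborel) < \<infinity>"
    unfolding product by (subst nn_integral_lborel_prod) (auto simp: power_less_top_ennreal)
qed

lemma integrable_exp_neg_of_quadratic_lower_bound:
  fixes \<phi> :: "'a::euclidean_space \<Rightarrow> real"
  assumes "\<phi> \<in> borel_measurable lborel" and "\<mu> > 0"
    and "\<And>z. A + g \<bullet> z + \<mu> / 2 * (norm z)\<^sup>2 \<le> \<phi> z"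
  shows "integrable lborel (\<lambda>z. exp (- \<phi> z))"
proof (rule Bochner_Integration.integrable_bound)
  show "integrable lborel (\<lambda>z::'a. exp ((norm g)\<^sup>2 / \<mu> - A) * exp (- (\<mu> / 4) * (norm z)\<^sup>2))"
    using integrable_exp_neg_norm_sq[of "\<mu> / 4"] assms(2) by simp
  show "AE z in lborel. norm (exp (- \<phi> z)) \<le> norm (exp ((norm g)\<^sup>2 / \<mu> - A) * exp (- (\<mu> / 4) * (norm z)\<^sup>2))"
  proof (rule AE_I2)
    fix z
    have "- (g \<bullet> z) \<le> norm g * norm z"
      using norm_cauchy_schwarz[of "- g" z] by simp
    also have "\<dots> \<le> \<mu> / 4 * (norm z)\<^sup>2 + (norm g)\<^sup>2 / \<mu>"
    proof -
      have "0 \<le> (\<mu> * norm z - 2 * norm g)\<^sup>2 / (4 * \<mu>)"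
        using assms(2) by simp
      also have "\<dots> = \<mu> / 4 * (norm z)\<^sup>2 + (norm g)\<^sup>2 / \<mu> - norm g * norm z"
        using assms(2) by (simp add: field_simps power2_eq_square)
      finally show ?thesis by simp
    qed
    finally have "- \<phi> z \<le> (norm g)\<^sup>2 / \<mu> - A + (- (\<mu> / 4) * (norm z)\<^sup>2)"
      using assms(3)[of z] by simp
    then show "norm (exp (- \<phi> z)) \<le> norm (exp ((norm g)\<^sup>2 / \<mu> - A) * exp (- (\<mu> / 4) * (norm z)\<^sup>2))"
      by (simp add: exp_add[symmetric])
  qed
qed (use assms(1) in measurable)

lemma integral_lborel_pos:
  fixes f :: "'a::euclidean_space \<Rightarrow> real"
  assumes "integrable lborel f" and "\<And>z. 0 < f z"
  shows "0 < integral\<^sup>L lborel f"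
proof -
  have "integral\<^sup>L lborel f \<noteq> 0"
  proof
    assume "integral\<^sup>L lborel f = 0"
    then have "AE z in lborel. f z = 0"
      using integral_nonneg_eq_0_iff_AE[OF assms(1)] assms(2) by (simp add: less_imp_le)
    then have "AE z in lborel. z \<notin> (UNIV :: 'a set)"
      using assms(2) by (simp add: less_imp_neq[symmetric])
    then have "(UNIV :: 'a set) \<in> null_sets lborel"
      by (subst AE_iff_null_sets) auto
    then show False
      by auto
  qed
  moreover have "0 \<le> integral\<^sup>L lborel f"
    using assms(2) by (simp add: less_imp_le)
  ultimately show ?thesis
    by simp
qed

lemma lipschitz_gradient_upper_bound:
  fixes f :: "'a::real_inner \<Rightarrow> real"
  assumes grad: "\<And>y. (f has_derivative (\<lambda>h. G y \<bullet> h)) (at y)"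
    and lip: "\<And>y z. norm (G y - G z) \<le> L * norm (y - z)"
  shows "f y \<le> f x + G x \<bullet> (y - x) + L / 2 * (norm (y - x))\<^sup>2"
proof -
  define d where "d = y - x"
  define \<psi> where "\<psi> t = f (x + t *\<^sub>R d) - t * (G x \<bullet> d) - L / 2 * t\<^sup>2 * (norm d)\<^sup>2" for t :: real
  have \<psi>_deriv: "(\<psi> has_real_derivative (G (x + t *\<^sub>R d) - G x) \<bullet> d - L * t * (norm d)\<^sup>2) (at t)" for t
  proof -
    have "((\<lambda>t. f (x + t *\<^sub>R d)) has_derivative (\<lambda>s. G (x + t *\<^sub>R d) \<bullet> (s *\<^sub>R d))) (at t)"
      by (rule has_derivative_compose[OF _ grad, unfolded o_def]) (auto intro!: derivative_eq_intros)
    then have "((\<lambda>t. f (x + t *\<^sub>R d)) has_real_derivative G (x + t *\<^sub>R d) \<bullet> d) (at t)"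
      unfolding has_field_derivative_def by (rule has_derivative_eq_rhs) (simp add: fun_eq_iff)
    then show ?thesis
      unfolding \<psi>_def by (auto intro!: derivative_eq_intros simp: inner_diff_left)
  qed
  have "\<psi> 1 \<le> \<psi> 0"
  proof (rule DERIV_nonpos_imp_decreasing_open[of 0 1])
    show "continuous_on {0..1} \<psi>"
      using \<psi>_deriv by (meson DERIV_isCont continuous_at_imp_continuous_on)
    fix t :: real
    assume t: "0 < t" "t < 1"
    have "(G (x + t *\<^sub>R d) - G x) \<bullet> d \<le> norm (G (x + t *\<^sub>R d) - G x) * norm d"
      by (rule norm_cauchy_schwarz)
    also have "\<dots> \<le> L * (t * norm d) * norm d"
      using lip[of "x + t *\<^sub>R d" x] t by (intro mult_right_mono) auto
    also have "\<dots> = L * t * (norm d)\<^sup>2"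
      by (simp add: power2_eq_square)
    finally show "\<exists>y. (\<psi> has_real_derivative y) (at t) \<and> y \<le> 0"
      using \<psi>_deriv by force
  qed simp
  then show ?thesis
    by (simp add: \<psi>_def d_def)
qed

lemma has_derivative_inner_unique:
  fixes a b :: "'a::real_inner"
  assumes "(f has_derivative (\<lambda>h. a \<bullet> h)) (at y)" and "(f has_derivative (\<lambda>h. b \<bullet> h)) (at y)"
  shows "a = b"
proof -
  have "(\<lambda>h. a \<bullet> h) = (\<lambda>h. b \<bullet> h)"
    using has_derivative_unique[OF assms] .
  then have "(a - b) \<bullet> (a - b) = 0"
    by (metis inner_diff_left right_minus_eq)
  then show ?thesis
    by simp
qed

lemma hessian_at_imp_has_derivative_gradient:
  assumes "hessian_at f x H" and grad: "\<And>y. (f has_derivative (\<lambda>h. G y \<bullet> h)) (at y)"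
  shows "(G has_derivative H) (at x)"
proof -
  obtain G' where "\<forall>\<^sub>F y in nhds x. (f has_derivative (\<lambda>h. G' y \<bullet> h)) (at y)"
    and G'_deriv: "(G' has_derivative H) (at x)"
    using assms(1) unfolding hessian_at_def by blast
  then obtain U where "open U" "x \<in> U" and "\<And>y. y \<in> U \<Longrightarrow> (f has_derivative (\<lambda>h. G' y \<bullet> h)) (at y)"
    unfolding eventually_nhds by blast
  then have "\<And>y. y \<in> U \<Longrightarrow> G' y = G y"
    using has_derivative_inner_unique grad by blast
  then show ?thesis
    using has_derivative_transform_within_open[OF G'_deriv \<open>open U\<close> \<open>x \<in> U\<close>] by blast
qed

lemma norm_derivative_le_lipschitz:
  fixes G :: "'a::real_normed_vector \<Rightarrow> 'b::real_normed_vector"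
  assumes deriv: "(G has_derivative D) (at x)" and lip: "\<And>y z. norm (G y - G z) \<le> L * norm (y - z)"
  shows "norm (D v) \<le> L * norm v"
proof (rule ccontr)
  assume gap: "\<not> norm (D v) \<le> L * norm v"
  have lin: "linear D"
    using deriv has_derivative_linear by blast
  then have "norm v > 0"
    using gap linear_0[OF lin] by auto
  define e where "e = (norm (D v) - L * norm v) / (2 * norm v)"
  have "e > 0"
    using gap \<open>norm v > 0\<close> by (simp add: e_def)
  then obtain \<delta> where "\<delta> > 0"
    and \<delta>: "\<And>y. norm (y - x) < \<delta> \<Longrightarrow> norm (G y - G x - D (y - x)) \<le> e * norm (y - x)"
    using deriv unfolding has_derivative_at_alt by blast
  define t where "t = \<delta> / (2 * norm v)"
  have "t > 0" and "t * norm v < \<delta>"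
    using \<open>\<delta> > 0\<close> \<open>norm v > 0\<close> by (simp_all add: t_def)
  then have remainder: "norm (G (x + t *\<^sub>R v) - G x - t *\<^sub>R D v) \<le> e * (t * norm v)"
    using \<delta>[of "x + t *\<^sub>R v"] by (simp add: linear_scale[OF lin])
  have "t * norm (D v) = norm (t *\<^sub>R D v)"
    using \<open>t > 0\<close> by simp
  also have "\<dots> \<le> norm (G (x + t *\<^sub>R v) - G x) + norm (G (x + t *\<^sub>R v) - G x - t *\<^sub>R D v)"
    using norm_triangle_ineq4[of "G (x + t *\<^sub>R v) - G x" "G (x + t *\<^sub>R v) - G x - t *\<^sub>R D v"]
    by simp
  also have "\<dots> \<le> t * (L * norm v + e * norm v)"
    using lip[of "x + t *\<^sub>R v" x] remainder \<open>t > 0\<close> by (simp add: algebra_simps)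
  finally have "norm (D v) \<le> L * norm v + e * norm v"
    using \<open>t > 0\<close> by simp
  also have "\<dots> = (L * norm v + norm (D v)) / 2"
    using \<open>norm v > 0\<close> by (simp add: e_def field_simps)
  finally show False
    using gap by simp
qed

definition tilt_potential :: "real \<Rightarrow> 'a::real_inner \<Rightarrow> 'a \<Rightarrow> real" where
  "tilt_potential \<tau> x z = (norm (x - exp (- \<tau>) *\<^sub>R z))\<^sup>2 / (2 * (1 - exp (-2 * \<tau>)))"

lemma q_cond_eq_tilt_potential:
  "q_cond p \<tau> x z = exp (ln (p z) - tilt_potential \<tau> x z)
     / (\<integral>y. exp (ln (p y) - tilt_potential \<tau> x y) \<partial>lborel)"
  unfolding q_cond_def tilt_potential_def Let_def ..

lemma tilt_potential_expand:
  fixes \<tau> :: real and x z :: "'a::real_inner"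
  defines "c \<equiv> exp (-2 * \<tau>) / (1 - exp (-2 * \<tau>))" and "b \<equiv> exp (- \<tau>) / (1 - exp (-2 * \<tau>))"
  shows "tilt_potential \<tau> x z = tilt_potential \<tau> x 0 + (- b *\<^sub>R x) \<bullet> z + c / 2 * (norm z)\<^sup>2"
proof -
  define s where "s = 1 - exp (-2 * \<tau>)"
  have square: "(norm (x - exp (- \<tau>) *\<^sub>R z))\<^sup>2
      = (norm x)\<^sup>2 - 2 * exp (- \<tau>) * (x \<bullet> z) + exp (-2 * \<tau>) * (norm z)\<^sup>2"
    by (simp add: power2_norm_eq_inner inner_diff_left inner_diff_right inner_commute
        algebra_simps mult_exp_exp)
  have "(X - 2 * a * w + u * Z) / (2 * s) = X / (2 * s) - a / s * w + u / s / 2 * Z" for X a w u Z :: real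
    by (cases "s = 0") (simp_all add: field_simps)
  then show ?thesis
    unfolding tilt_potential_def square c_def b_def s_def[symmetric] by simp
qed

lemma has_derivative_tilt_potential:
  fixes \<tau> :: real and x y :: "'a::real_inner"
  defines "c \<equiv> exp (-2 * \<tau>) / (1 - exp (-2 * \<tau>))" and "b \<equiv> exp (- \<tau>) / (1 - exp (-2 * \<tau>))"
  shows "(tilt_potential \<tau> x has_derivative (\<lambda>h. (c *\<^sub>R y - b *\<^sub>R x) \<bullet> h)) (at y)"
proof -
  have quadratic: "tilt_potential \<tau> x = (\<lambda>z. tilt_potential \<tau> x 0 + (- b *\<^sub>R x) \<bullet> z + c / 2 * (z \<bullet> z))"
    using tilt_potential_expand unfolding c_def b_def power2_norm_eq_inner by blast
  show ?thesis
    by (subst quadratic) (auto intro!: derivative_eq_intros simp: inner_diff_left inner_commute algebra_simps)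
qed

lemma exp_ratio_ge_two_mul:
  assumes "(L::real) > 0" and "\<tau> > 0" and "\<tau> \<le> ln ((2 * L + 1) / (2 * L)) / 2"
  shows "2 * L \<le> exp (-2 * \<tau>) / (1 - exp (-2 * \<tau>))"
proof -
  have "2 * L / (2 * L + 1) = exp (- ln ((2 * L + 1) / (2 * L)))"
    using assms(1) by (simp add: exp_minus)
  also have "\<dots> \<le> exp (-2 * \<tau>)"
    using assms(3) by simp
  finally have "2 * L \<le> exp (-2 * \<tau>) * (2 * L + 1)"
    using assms(1) by (simp add: pos_divide_le_eq)
  moreover have "exp (-2 * \<tau>) < 1"
    using assms(2) by simp
  ultimately show ?thesis
    by (simp add: pos_le_divide_eq algebra_simps)
qed

lemma neg_ln_q_cond_hessian_bounds:
  fixes p :: "'a::euclidean_space \<Rightarrow> real" and \<tau> L :: real and x x' v :: 'a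
  defines "c \<equiv> exp (-2 * \<tau>) / (1 - exp (-2 * \<tau>))"
  assumes "grad_log_lipschitz L p" and "L < c"
    and hessian: "hessian_at (\<lambda>z. - ln (q_cond p \<tau> x z)) x' H"
  shows "(c - L) * (norm v)\<^sup>2 \<le> v \<bullet> H v" and "v \<bullet> H v \<le> (c + L) * (norm v)\<^sup>2"
proof -
  obtain G where grad_ln_p: "\<And>y. ((\<lambda>z. ln (p z)) has_derivative (\<lambda>h. G y \<bullet> h)) (at y)"
    and G_lipschitz: "\<And>y z. norm (G y - G z) \<le> L * norm (y - z)"
    using assms(2) unfolding grad_log_lipschitz_def by blast
  define b where "b = exp (- \<tau>) / (1 - exp (-2 * \<tau>))"
  define \<phi> where "\<phi> z = tilt_potential \<tau> x z - ln (p z)" for z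
  define g\<phi> where "g\<phi> y = (c *\<^sub>R y - b *\<^sub>R x) - G y" for y
  have grad_\<phi>: "(\<phi> has_derivative (\<lambda>h. g\<phi> y \<bullet> h)) (at y)" for y
  proof -
    have "(\<phi> has_derivative (\<lambda>h. (c *\<^sub>R y - b *\<^sub>R x) \<bullet> h - G y \<bullet> h)) (at y)"
      unfolding \<phi>_def c_def b_def by (rule has_derivative_diff[OF has_derivative_tilt_potential grad_ln_p])
    then show ?thesis
      by (rule has_derivative_eq_rhs) (simp add: g\<phi>_def inner_diff_left)
  qed
  have lower: "\<phi> 0 + g\<phi> 0 \<bullet> z + (c - L) / 2 * (norm z)\<^sup>2 \<le> \<phi> z" for z
  proof -
    have "ln (p z) \<le> ln (p 0) + G 0 \<bullet> z + L / 2 * (norm z)\<^sup>2"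
      using lipschitz_gradient_upper_bound[OF grad_ln_p G_lipschitz, of z 0] by simp
    moreover have "(c - L) / 2 * (norm z)\<^sup>2 = c / 2 * (norm z)\<^sup>2 - L / 2 * (norm z)\<^sup>2"
      by (simp add: diff_divide_distrib left_diff_distrib)
    ultimately show ?thesis
      using tilt_potential_expand[of \<tau> x z, folded c_def b_def]
      by (simp add: \<phi>_def g\<phi>_def inner_diff_left diff_divide_distrib)
  qed
  have "continuous_on UNIV \<phi>"
    using grad_\<phi> by (meson continuous_at_imp_continuous_on has_derivative_continuous)
  then have "\<phi> \<in> borel_measurable lborel"
    by (simp add: borel_measurable_continuous_onI)
  \<comment> \<open>Here \<open>L < c\<close> is needed: otherwise the normaliser may diverge and take the junk value 0.\<close>
  then have "integrable lborel (\<lambda>z. exp (- \<phi> z))"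
    using integrable_exp_neg_of_quadratic_lower_bound[OF _ _ lower] \<open>L < c\<close> by simp
  then have normaliser_pos: "0 < (\<integral>z. exp (- \<phi> z) \<partial>lborel)"
    by (rule integral_lborel_pos) simp
  have "(\<lambda>z. - ln (q_cond p \<tau> x z)) = (\<lambda>z. \<phi> z + ln (\<integral>z. exp (- \<phi> z) \<partial>lborel))"
    using normaliser_pos by (simp add: q_cond_eq_tilt_potential \<phi>_def ln_div fun_eq_iff)
  then have "((\<lambda>z. - ln (q_cond p \<tau> x z)) has_derivative (\<lambda>h. g\<phi> y \<bullet> h)) (at y)" for y
    using has_derivative_add_const[OF grad_\<phi>] by simp
  then have "(g\<phi> has_derivative H) (at x')"
    by (rule hessian_at_imp_has_derivative_gradient[OF hessian])
  then have "((\<lambda>y. (c *\<^sub>R y - b *\<^sub>R x) - g\<phi> y) has_derivative (\<lambda>h. c *\<^sub>R h - H h)) (at x')"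
    by (auto intro!: derivative_eq_intros)
  then have "(G has_derivative (\<lambda>h. c *\<^sub>R h - H h)) (at x')"
    by (simp add: g\<phi>_def)
  then have "norm (c *\<^sub>R v - H v) \<le> L * norm v"
    using norm_derivative_le_lipschitz G_lipschitz by blast
  then have "norm v * norm (c *\<^sub>R v - H v) \<le> norm v * (L * norm v)"
    by (rule mult_left_mono) simp
  also have "\<dots> = L * (norm v)\<^sup>2"
    by (simp add: power2_eq_square)
  finally have "\<bar>v \<bullet> (c *\<^sub>R v - H v)\<bar> \<le> L * (norm v)\<^sup>2"
    using Cauchy_Schwarz_ineq2[of v "c *\<^sub>R v - H v"] by linarith
  moreover have "v \<bullet> (c *\<^sub>R v - H v) = c * (norm v)\<^sup>2 - v \<bullet> H v"
    by (simp add: inner_diff_right power2_norm_eq_inner)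
  ultimately show "(c - L) * (norm v)\<^sup>2 \<le> v \<bullet> H v" and "v \<bullet> H v \<le> (c + L) * (norm v)\<^sup>2"
    by (simp_all add: abs_le_iff left_diff_distrib distrib_right)
qed

theorem lemma10:
  fixes p_star :: "'a::euclidean_space \<Rightarrow> real"
    and L S \<eta> :: real and K R k r :: nat and x x' :: 'a and H :: "'a \<Rightarrow> 'a"
  assumes "prob_density p_star"
    and "L > 0"
    and "S = ln ((2 * L + 1) / (2 * L)) / 2"
    and "K \<ge> 1"
    and "\<eta> > 0" and "R \<ge> 1" and "S / \<eta> = real R"
    and "\<forall>k<K. \<forall>t\<in>{0..S}. grad_log_lipschitz L (OU_density p_star (real k * S + t))"
    and "k < K" and "r < R"
    and "hessian_at (\<lambda>z. - ln (q_cond (OU_density p_star (real k * S)) (S - real r * \<eta>) x z)) x' H"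
  shows "\<forall>v. (1/2) * (exp (-2 * (S - real r * \<eta>)) / (1 - exp (-2 * (S - real r * \<eta>)))) * (norm v)^2
                \<le> v \<bullet> H v
           \<and> v \<bullet> H v
                \<le> (3/2) * (exp (-2 * (S - real r * \<eta>)) / (1 - exp (-2 * (S - real r * \<eta>)))) * (norm v)^2"
proof -
  define \<tau> where "\<tau> = S - real r * \<eta>"
  define c where "c = exp (-2 * \<tau>) / (1 - exp (-2 * \<tau>))"
  have "(real r + 1) * \<eta> \<le> real R * \<eta>"
    using \<open>r < R\<close> \<open>\<eta> > 0\<close> by (intro mult_right_mono) auto
  moreover have "S = real R * \<eta>"
    using \<open>\<eta> > 0\<close> \<open>S / \<eta> = real R\<close> by (simp add: field_simps)
  ultimately have "\<eta> \<le> \<tau>" and "\<tau> \<le> S"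
    using \<open>\<eta> > 0\<close> by (simp_all add: \<tau>_def algebra_simps)
  then have "2 * L \<le> c"
    unfolding c_def using exp_ratio_ge_two_mul \<open>L > 0\<close> \<open>\<eta> > 0\<close> assms(3) by simp
  \<comment> \<open>Only the Lipschitz hypothesis at time \<open>k S\<close> enters.\<close>
  have "0 \<le> S"
    using \<open>\<eta> \<le> \<tau>\<close> \<open>\<tau> \<le> S\<close> \<open>\<eta> > 0\<close> by linarith
  then have "grad_log_lipschitz L (OU_density p_star (real k * S))"
    using assms(8)[rule_format, OF \<open>k < K\<close>, of 0] by simp
  then have lower: "(c - L) * (norm v)\<^sup>2 \<le> v \<bullet> H v" and upper: "v \<bullet> H v \<le> (c + L) * (norm v)\<^sup>2" for v
    using neg_ln_q_cond_hessian_bounds[of L _ \<tau> x x' H v, folded c_def] assms(11) \<open>2 * L \<le> c\<close> \<open>L > 0\<close>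
    unfolding \<tau>_def by simp_all
  show ?thesis
    unfolding \<tau>_def[symmetric] c_def[symmetric]
  proof (intro allI conjI)
    fix v :: 'a
    have "1 / 2 * c * (norm v)\<^sup>2 \<le> (c - L) * (norm v)\<^sup>2" and "(c + L) * (norm v)\<^sup>2 \<le> 3 / 2 * c * (norm v)\<^sup>2"
      using \<open>2 * L \<le> c\<close> by (intro mult_right_mono; simp)+
    then show "1 / 2 * c * (norm v)\<^sup>2 \<le> v \<bullet> H v" and "v \<bullet> H v \<le> 3 / 2 * c * (norm v)\<^sup>2"
      using lower[of v] upper[of v] by linarith+
  qed
qed

end
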